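(* Let $0<c<1$ and $\varepsilon,\delta>0$ be fixed, and $d=d(n)=o(n)$. Let $\mathcal{G}^{\varepsilon,\delta}_{d,c}(n)\subseteq\mathcal{G}_{d,c}(n)$ be the set of graphs in which at least $\varepsilon\,(d/2)\,n$ edges are $\delta$-bad. Then, as $n\to\infty$, \[ \log \lvert\mathcal{G}_{d,c}^{\varepsilon,\delta}(n)\rvert \leq \left(1 - c\frac{d-1}{d+1} - \frac{\varepsilon \delta d}{3d+3}\right) \frac{dn}{2} \log \frac{n}{d} + \left(c + \frac{\varepsilon \delta d}{3d+3}\right)\frac{dn}{2} \log d + O(dn).\]
   Context: $T_{\max}=\binom d2\frac n3$; $\mathcal{G}_{d,c}(n)$ is the set of $d$-regular graphs on $n$ labeled nodes with at least $c\cdot T_{\max}$ triangles. For an edge $e$ of a graph, $t_e$ is the number of triangles containing $e$. An edge $e$ of a $d$-regular graph is $\delta$-bad if $1\le t_e\le d-1-\delta d$. *)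

theory Defs
  imports Complex_Main
begin

definition simple_graph :: "nat \<Rightarrow> nat set set \<Rightarrow> bool" where
  "simple_graph n E \<longleftrightarrow> (\<forall>e\<in>E. e \<subseteq> {..<n} \<and> card e = 2)"

definition degree :: "nat set set \<Rightarrow> nat \<Rightarrow> nat" where
  "degree E v = card {e\<in>E. v \<in> e}"

definition regular :: "nat \<Rightarrow> nat \<Rightarrow> nat set set \<Rightarrow> bool" where
  "regular n d E \<longleftrightarrow> (\<forall>v<n. degree E v = d)"

definition triangle_set :: "nat \<Rightarrow> nat set set \<Rightarrow> nat set set" where
  "triangle_set n E = {t. t \<subseteq> {..<n} \<and> card t = 3 \<and> (\<forall>e. e \<subseteq> t \<and> card e = 2 \<longrightarrow> e \<in> E)}"

definition num_triangles :: "nat \<Rightarrow> nat set set \<Rightarrow> nat" where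
  "num_triangles n E = card (triangle_set n E)"

definition edge_triangles :: "nat \<Rightarrow> nat set set \<Rightarrow> nat set \<Rightarrow> nat" where
  "edge_triangles n E e = card {t\<in>triangle_set n E. e \<subseteq> t}"

definition T_max :: "nat \<Rightarrow> nat \<Rightarrow> real" where
  "T_max d n = real (d choose 2) * real n / 3"

definition bad_edge :: "nat \<Rightarrow> nat \<Rightarrow> real \<Rightarrow> nat set set \<Rightarrow> nat set \<Rightarrow> bool" where
  "bad_edge n d \<delta> E e \<longleftrightarrow> e \<in> E \<and> 1 \<le> edge_triangles n E e \<and>
     real (edge_triangles n E e) \<le> real d - 1 - \<delta> * real d"

definition G_dc :: "nat \<Rightarrow> nat \<Rightarrow> real \<Rightarrow> nat set set set" where
  "G_dc n d c = {E. simple_graph n E \<and> regular n d E \<and> real (num_triangles n E) \<ge> c * T_max d n}"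

definition G_bad :: "nat \<Rightarrow> nat \<Rightarrow> real \<Rightarrow> real \<Rightarrow> real \<Rightarrow> nat set set set" where
  "G_bad n d c \<epsilon> \<delta> = {E \<in> G_dc n d c.
     real (card {e. bad_edge n d \<delta> E e}) \<ge> \<epsilon> * (real d / 2) * real n}"

end

theory Submission
  imports Defs "HOL-Combinatorics.Permutations"
begin

text \<open>Relabel a graph \<open>G\<close> by a uniformly random permutation of its vertices and call an edge
  cheap if its endpoints have a common neighbour with a smaller label than both. An edge lying
  in \<open>t\<^sub>e\<close> triangles is cheap with probability \<open>t\<^sub>e / (t\<^sub>e + 2) \<ge> t\<^sub>e / (d + 1)\<close>, with an extra
  \<open>\<delta> d / (3 d + 3)\<close> for \<open>\<delta>\<close>-bad edges, so the triangle and bad-edge conditions make the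
  expected number of cheap edges at least \<open>\<alpha> m\<close>, where \<open>m = d n / 2\<close> is the number of edges and
  \<open>\<alpha> = c (d - 1) / (d + 1) + \<epsilon> \<delta> d / (3 d + 3)\<close>. By a reverse Markov inequality a
  \<open>1 / (m + 1)\<close> fraction of the relabellings has at least \<open>\<alpha> m - 1\<close> cheap edges, so up to a
  factor \<open>m + 1\<close> it suffices to count \<open>d\<close>-regular graphs with that many cheap edges.

  Such a graph is encoded by listing the forward neighbourhood of every vertex in increasing
  order. The far end of a cheap edge is adjacent to an earlier neighbour, hence is one of at most
  \<open>d\<^sup>2\<close> known vertices, and costs \<open>ln d\<close> instead of \<open>ln (n / d)\<close>. This gives the bound
  \<open>\<alpha> m ln d + (1 - \<alpha>) m ln (n / d) + O(d n)\<close> when \<open>d\<^sup>2 \<le> n\<close>; when \<open>d\<^sup>2 > n\<close> the trivial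
  encoding is already good enough.\<close>

section \<open>Counting and elementary estimates\<close>

lemma sum_card_filter_swap:
  assumes "finite A" "finite B"
  shows "(\<Sum>a\<in>A. card {b\<in>B. R a b}) = (\<Sum>b\<in>B. card {a\<in>A. R a b})"
proof -
  have card_filter: "card {x\<in>X. P x} = (\<Sum>x\<in>X. if P x then 1 else 0)"
    if "finite X" for X and P :: "'c \<Rightarrow> bool"
    using that by (simp add: sum.If_cases Int_def)
  have "(\<Sum>a\<in>A. card {b\<in>B. R a b}) = (\<Sum>a\<in>A. \<Sum>b\<in>B. if R a b then 1 else 0)"
    using assms by (simp add: card_filter)
  also have "\<dots> = (\<Sum>b\<in>B. \<Sum>a\<in>A. if R a b then 1 else 0)" by (rule sum.swap)
  also have "\<dots> = (\<Sum>b\<in>B. card {a\<in>A. R a b})"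
    using assms by (simp add: card_filter)
  finally show ?thesis .
qed

lemma reverse_markov_card:
  fixes X :: "'a \<Rightarrow> real"
  assumes "finite P" and le_M: "\<And>x. x \<in> P \<Longrightarrow> X x \<le> M"
    and mean: "real (card P) * a \<le> (\<Sum>x\<in>P. X x)" and "a \<ge> 0"
  shows "real (card P) \<le> real (card {x\<in>P. a - 1 \<le> X x}) * (M + 1)"
proof -
  let ?G = "{x\<in>P. a - 1 \<le> X x}" and ?B = "{x\<in>P. \<not> a - 1 \<le> X x}"
  have P: "P = ?G \<union> ?B" "?G \<inter> ?B = {}" "finite ?G" "finite ?B"
    using \<open>finite P\<close> by auto
  have "(\<Sum>x\<in>P. X x) = (\<Sum>x\<in>?G. X x) + (\<Sum>x\<in>?B. X x)"
    by (subst P(1)) (rule sum.union_disjoint[OF P(3,4,2)])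
  also have "\<dots> \<le> real (card ?G) * M + real (card ?B) * (a - 1)"
    using sum_mono[of ?G X "\<lambda>_. M"] sum_mono[of ?B X "\<lambda>_. a - 1"] le_M
    by (intro add_mono) auto
  also have "real (card ?B) = real (card P) - real (card ?G)"
    using P card_Un_disjoint[of ?G ?B] by simp
  finally have "real (card P) * a \<le> real (card ?G) * M + (real (card P) - real (card ?G)) * (a - 1)"
    using mean by linarith
  moreover have "real (card ?G) * a \<ge> 0" using \<open>a \<ge> 0\<close> by simp
  ultimately show ?thesis by (simp add: algebra_simps)
qed

lemma card_sequential_choices_le:
  fixes Opt :: "nat \<Rightarrow> (nat \<Rightarrow> 'a) \<Rightarrow> 'a set"
  assumes cong: "\<And>u f g. (\<forall>w<u. f w = g w) \<Longrightarrow> Opt u f = Opt u g"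
    and fin: "\<And>u f. finite (Opt u f)"
    and bnd: "\<And>u f. card (Opt u f) \<le> M u"
  shows "finite {f. (\<forall>u<k. f u \<in> Opt u f) \<and> (\<forall>u\<ge>k. f u = z)}
    \<and> card {f. (\<forall>u<k. f u \<in> Opt u f) \<and> (\<forall>u\<ge>k. f u = z)} \<le> (\<Prod>u<k. M u)"
proof (induction k)
  case 0
  have "{f. (\<forall>u<0. f u \<in> Opt u f) \<and> (\<forall>u\<ge>0. f u = z)} = {\<lambda>_. z}" by auto
  then show ?case by simp
next
  case (Suc k)
  let ?S = "\<lambda>k. {f. (\<forall>u<k. f u \<in> Opt u f) \<and> (\<forall>u\<ge>k. f u = z)}"
  let ?extend = "\<lambda>(f, x). f(k := x)"
  have sub: "?S (Suc k) \<subseteq> ?extend ` (SIGMA f:?S k. Opt k f)"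
  proof
    fix g assume g: "g \<in> ?S (Suc k)"
    let ?f = "g(k := z)"
    have Opt_eq: "Opt u ?f = Opt u g" if "u \<le> k" for u
      using that by (intro cong) auto
    have "?f \<in> ?S k" using g Opt_eq by auto
    moreover have "g k \<in> Opt k ?f" using g Opt_eq[of k] by auto
    ultimately show "g \<in> ?extend ` (SIGMA f:?S k. Opt k f)"
      by (intro image_eqI[of _ _ "(?f, g k)"]) auto
  qed
  have finSig: "finite (SIGMA f:?S k. Opt k f)" using Suc.IH fin by auto
  have "card (SIGMA f:?S k. Opt k f) = (\<Sum>f\<in>?S k. card (Opt k f))"
    using Suc.IH fin by (simp add: card_SigmaI)
  also have "\<dots> \<le> (\<Sum>f\<in>?S k. M k)" by (intro sum_mono bnd)
  also have "\<dots> = card (?S k) * M k" by simp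
  also have "\<dots> \<le> (\<Prod>u<Suc k. M u)" using Suc.IH by simp
  finally have "card (SIGMA f:?S k. Opt k f) \<le> (\<Prod>u<Suc k. M u)" .
  moreover have "card (?S (Suc k)) \<le> card (SIGMA f:?S k. Opt k f)"
    using card_mono[OF finite_imageI[OF finSig] sub] card_image_le[OF finSig, of ?extend] by linarith
  ultimately show ?case using finite_subset[OF sub finite_imageI[OF finSig]] by simp
qed

lemma power_div_fact_le_exp:
  fixes x :: real
  assumes "x \<ge> 0"
  shows "x ^ k / fact k \<le> exp x"
proof -
  have s: "(\<lambda>n. x ^ n / fact n) sums exp x"
    using exp_converges[of x] by (simp add: divide_inverse mult.commute)
  have "(\<Sum>n\<in>{k}. x ^ n / fact n) \<le> (\<Sum>n. x ^ n / fact n)"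
    by (rule sum_le_suminf[OF sums_summable[OF s]]) (use assms in auto)
  then show ?thesis using sums_unique[OF s] by simp
qed

lemma binomial_le_power_div_fact: "real (n choose k) \<le> real n ^ k / fact k"
proof -
  have "real ((n choose k) * fact k) \<le> real (n ^ k)"
    using binomial_fact_pow[of n k] by (simp only: of_nat_le_iff)
  then show ?thesis by (simp add: field_simps)
qed

lemma divide_add_two_ge:
  fixes t d :: real
  assumes "t \<ge> 0" "t + 1 \<le> d"
  shows "t / (d + 1) \<le> t / (t + 2)"
  using assms by (intro divide_left_mono) auto

lemma divide_add_two_ge_bad:
  fixes t d \<delta> :: real
  assumes t: "t \<ge> 1" and td: "t \<le> d - 1 - \<delta> * d" and "\<delta> > 0" "d \<ge> 1"
  shows "t / (d + 1) + \<delta> * d / (3 * (d + 1)) \<le> t / (t + 2)"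
proof -
  have "3 * t * (\<delta> * d) \<le> 3 * t * (d + 1 - (t + 2))"
    using t td by (intro mult_left_mono) auto
  moreover have "(t + 2) * (\<delta> * d) \<le> 3 * t * (\<delta> * d)"
    using assms by (intro mult_right_mono) auto
  ultimately have "(3 * t + \<delta> * d) * (t + 2) \<le> t * (3 * (d + 1))"
    by (simp add: algebra_simps)
  moreover have "t / (d + 1) + \<delta> * d / (3 * (d + 1)) = (3 * t + \<delta> * d) / (3 * (d + 1))"
    by (simp add: add_divide_distrib mult_divide_mult_cancel_left[of 3 t "d + 1", symmetric])
  ultimately show ?thesis
    using t \<open>d \<ge> 1\<close> by (simp add: divide_le_eq le_divide_eq mult.commute)
qed

lemma real_choose_two: "real (d choose 2) = real d * (real d - 1) / 2"
proof (cases d)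
  case (Suc k)
  have "2 * (d choose 2) = d * k" using Suc by (simp add: choose_two)
  then have "2 * real (d choose 2) = real d * real k" by (metis of_nat_mult of_nat_numeral)
  then show ?thesis using Suc by simp
qed simp

section \<open>Simple graphs, degrees and triangles\<close>

definition neighbours :: "nat set set \<Rightarrow> nat \<Rightarrow> nat set" where
  "neighbours H x = {w. {x, w} \<in> H}"

definition common_neighbours :: "nat set set \<Rightarrow> nat \<Rightarrow> nat \<Rightarrow> nat set" where
  "common_neighbours H x y = {w. {w, x} \<in> H \<and> {w, y} \<in> H}"

lemma simple_graph_edgeD: "simple_graph n H \<Longrightarrow> e \<in> H \<Longrightarrow> e \<subseteq> {..<n} \<and> card e = 2"
  by (auto simp: simple_graph_def)

lemma simple_graph_doubletonD:
  "simple_graph n H \<Longrightarrow> {x, y} \<in> H \<Longrightarrow> x \<noteq> y \<and> x < n \<and> y < n"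
  using simple_graph_edgeD[of n H "{x, y}"] by (auto simp: card_2_iff doubleton_eq_iff)

lemma simple_graph_edgeE:
  assumes "simple_graph n H" "e \<in> H"
  obtains x y where "e = {x, y}" "x < y" "y < n"
proof -
  from simple_graph_edgeD[OF assms] obtain x y where "e = {x, y}" "x \<noteq> y" "x < n" "y < n"
    by (auto simp: card_2_iff)
  then show ?thesis using that by (metis insert_commute linorder_neqE_nat)
qed

lemma simple_graph_finite: "simple_graph n H \<Longrightarrow> finite H"
  by (rule finite_subset[of _ "Pow {..<n}"]) (auto simp: simple_graph_def)

lemma finite_simple_graphs: "finite {H. simple_graph n H}"
  by (rule finite_subset[of _ "Pow (Pow {..<n})"]) (auto simp: simple_graph_def)

lemma neighbours_subset: "simple_graph n H \<Longrightarrow> neighbours H x \<subseteq> {..<n}"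
  by (auto simp: neighbours_def dest: simple_graph_doubletonD)

lemma degree_eq_card_neighbours:
  assumes "simple_graph n H"
  shows "degree H x = card (neighbours H x)"
proof -
  have "{e\<in>H. x \<in> e} = (\<lambda>w. {x, w}) ` neighbours H x"
  proof (auto simp: neighbours_def)
    fix e assume "e \<in> H" "x \<in> e"
    then obtain a b where "e = {a, b}"
      using simple_graph_edgeD[OF assms \<open>e \<in> H\<close>] by (auto simp: card_2_iff)
    then show "e \<in> (\<lambda>w. {x, w}) ` {w. {x, w} \<in> H}"
      using \<open>x \<in> e\<close> \<open>e \<in> H\<close> by (auto simp: image_iff insert_commute)
  qed
  moreover have "inj_on (\<lambda>w. {x, w}) (neighbours H x)"
    by (auto simp: inj_on_def doubleton_eq_iff)
  ultimately show ?thesis unfolding degree_def by (simp add: card_image)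
qed

lemma regular_card_neighbours:
  assumes "simple_graph n H" "regular n d H" "x < n"
  shows "card (neighbours H x) = d"
  using assms degree_eq_card_neighbours[OF assms(1)] by (simp add: regular_def)

lemma regular_card_edges:
  assumes sg: "simple_graph n H" and "regular n d H"
  shows "2 * card H = n * d"
proof -
  have "n * d = (\<Sum>v\<in>{..<n}. card {e\<in>H. v \<in> e})"
    using \<open>regular n d H\<close> by (simp add: regular_def degree_def)
  also have "\<dots> = (\<Sum>e\<in>H. card {v\<in>{..<n}. v \<in> e})"
    using simple_graph_finite[OF sg] by (intro sum_card_filter_swap) auto
  also have "\<dots> = (\<Sum>e\<in>H. 2)"
  proof (rule sum.cong)
    fix e assume "e \<in> H"
    then have "e \<subseteq> {..<n}" "card e = 2" using simple_graph_edgeD[OF sg] by auto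
    moreover from \<open>e \<subseteq> {..<n}\<close> have "{v\<in>{..<n}. v \<in> e} = e" by auto
    ultimately show "card {v\<in>{..<n}. v \<in> e} = 2" by simp
  qed simp
  finally show ?thesis by simp
qed

lemma real_card_regular:
  assumes "simple_graph n H" "regular n d H"
  shows "real (card H) = real n * real d / 2"
  using arg_cong[OF regular_card_edges[OF assms], of real] by simp

lemma card_edges_filter_eq_sum:
  assumes sg: "simple_graph n H"
  shows "card {e\<in>H. P e} = (\<Sum>u<n. card {v. u < v \<and> {u, v} \<in> H \<and> P {u, v}})"
proof -
  let ?S = "SIGMA u:{..<n}. {v. u < v \<and> {u, v} \<in> H \<and> P {u, v}}"
  have "bij_betw (\<lambda>(u, v). {u, v}) ?S {e\<in>H. P e}"
  proof (rule bij_betwI')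
    fix p q assume "p \<in> ?S" "q \<in> ?S"
    then show "((case p of (u, v) \<Rightarrow> {u, v}) = (case q of (u, v) \<Rightarrow> {u, v})) = (p = q)"
      by (cases p, cases q) (auto simp: doubleton_eq_iff)
  next
    fix e assume "e \<in> {e\<in>H. P e}"
    then obtain x y where "e = {x, y}" "x < y" "y < n" "e \<in> H" "P e"
      using simple_graph_edgeE[OF sg] by blast
    then show "\<exists>p\<in>?S. e = (case p of (u, v) \<Rightarrow> {u, v})" by (intro bexI[of _ "(x, y)"]) auto
  qed auto
  then have "card {e\<in>H. P e} = card ?S" by (simp add: bij_betw_same_card)
  also have "\<dots> = (\<Sum>u<n. card {v. u < v \<and> {u, v} \<in> H \<and> P {u, v}})"
  proof (rule card_SigmaI)
    show "\<forall>u\<in>{..<n}. finite {v. u < v \<and> {u, v} \<in> H \<and> P {u, v}}"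
      by (auto intro: finite_subset[of _ "{..<n}"] dest: simple_graph_doubletonD[OF sg])
  qed simp
  finally show ?thesis .
qed

lemma triangles_containing_edge:
  assumes sg: "simple_graph n H" and e: "{x, y} \<in> H"
  shows "{t\<in>triangle_set n H. {x, y} \<subseteq> t} = (\<lambda>w. {w, x, y}) ` common_neighbours H x y"
proof -
  have xy: "x \<noteq> y" "x < n" "y < n" using simple_graph_doubletonD[OF sg e] by auto
  show ?thesis
  proof (intro equalityI subsetI)
    fix t assume t: "t \<in> {t\<in>triangle_set n H. {x, y} \<subseteq> t}"
    then have c3: "card t = 3" and sub: "{x, y} \<subseteq> t"
      and edges: "\<And>e. e \<subseteq> t \<Longrightarrow> card e = 2 \<Longrightarrow> e \<in> H"
      by (auto simp: triangle_set_def)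
    from c3 obtain a b c where "t = {a, b, c}" "a \<noteq> b" "b \<noteq> c" "a \<noteq> c"
      by (auto simp: card_3_iff)
    with sub xy obtain w where w: "t = {w, x, y}" by auto
    with c3 xy have "w \<noteq> x" "w \<noteq> y" by (auto simp: card_insert_if split: if_splits)
    then have "{w, x} \<in> H" "{w, y} \<in> H" using edges w by auto
    then show "t \<in> (\<lambda>w. {w, x, y}) ` common_neighbours H x y"
      using w by (auto simp: common_neighbours_def)
  next
    fix t assume "t \<in> (\<lambda>w. {w, x, y}) ` common_neighbours H x y"
    then obtain w where w: "t = {w, x, y}" "{w, x} \<in> H" "{w, y} \<in> H"
      by (auto simp: common_neighbours_def)
    have wn: "w \<noteq> x" "w \<noteq> y" "w < n"
      using simple_graph_doubletonD[OF sg w(2)] simple_graph_doubletonD[OF sg w(3)] by auto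
    have "e' \<in> H" if "e' \<subseteq> t" "card e' = 2" for e'
    proof -
      from \<open>card e' = 2\<close> obtain p q where "e' = {p, q}" "p \<noteq> q" by (auto simp: card_2_iff)
      with \<open>e' \<subseteq> t\<close> have "e' = {w, x} \<or> e' = {w, y} \<or> e' = {x, y}"
        using w(1) by (auto simp: insert_commute)
      then show ?thesis using w e by auto
    qed
    then show "t \<in> {t\<in>triangle_set n H. {x, y} \<subseteq> t}"
      using w wn xy by (auto simp: triangle_set_def)
  qed
qed

lemma edge_triangles_eq_card_common_neighbours:
  assumes sg: "simple_graph n H" and e: "{x, y} \<in> H"
  shows "edge_triangles n H {x, y} = card (common_neighbours H x y)"
proof -
  have "inj_on (\<lambda>w. {w, x, y}) (common_neighbours H x y)"
  proof (rule inj_onI)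
    fix v w assume vw: "v \<in> common_neighbours H x y" "w \<in> common_neighbours H x y"
      "{v, x, y} = {w, x, y}"
    then have "v \<noteq> x" "v \<noteq> y" "w \<noteq> x" "w \<noteq> y"
      using simple_graph_doubletonD[OF sg] by (auto simp: common_neighbours_def)
    with vw(3) show "v = w" by auto
  qed
  then show ?thesis
    unfolding edge_triangles_def triangles_containing_edge[OF sg e] by (simp add: card_image)
qed

lemma card_common_neighbours_less:
  assumes sg: "simple_graph n H" and rg: "regular n d H" and e: "{x, y} \<in> H"
  shows "card (common_neighbours H x y) < d"
proof -
  have "x < n" using simple_graph_doubletonD[OF sg e] by auto
  have fin: "finite (neighbours H x)"
    using neighbours_subset[OF sg] by (rule finite_subset) simp
  have "common_neighbours H x y \<subseteq> neighbours H x - {y}"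
    using simple_graph_doubletonD[OF sg]
    by (auto simp: common_neighbours_def neighbours_def insert_commute)
  moreover have "y \<in> neighbours H x" using e by (simp add: neighbours_def)
  ultimately have "common_neighbours H x y \<subset> neighbours H x" by blast
  then have "card (common_neighbours H x y) < card (neighbours H x)"
    using fin by (rule psubset_card_mono[rotated])
  then show ?thesis using regular_card_neighbours[OF sg rg \<open>x < n\<close>] by simp
qed

lemma sum_edge_triangles:
  assumes sg: "simple_graph n H"
  shows "(\<Sum>e\<in>H. edge_triangles n H e) = 3 * num_triangles n H"
proof -
  have fin_triangles: "finite (triangle_set n H)"
    by (rule finite_subset[of _ "Pow {..<n}"]) (auto simp: triangle_set_def)
  have "(\<Sum>e\<in>H. edge_triangles n H e) = (\<Sum>t\<in>triangle_set n H. card {e\<in>H. e \<subseteq> t})"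
    unfolding edge_triangles_def
    using simple_graph_finite[OF sg] fin_triangles by (rule sum_card_filter_swap)
  also have "\<dots> = (\<Sum>t\<in>triangle_set n H. 3)"
  proof (rule sum.cong)
    fix t assume t: "t \<in> triangle_set n H"
    then have "{e\<in>H. e \<subseteq> t} = {e. e \<subseteq> t \<and> card e = 2}"
      using simple_graph_edgeD[OF sg] by (auto simp: triangle_set_def)
    moreover have "card t = 3" "finite t" using t by (auto simp: triangle_set_def intro: card_ge_0_finite)
    moreover have "(3::nat) choose 2 = 3" by (simp add: choose_two)
    ultimately show "card {e\<in>H. e \<subseteq> t} = 3" by (simp add: n_subsets)
  qed simp
  finally show ?thesis by (simp add: num_triangles_def)
qed

section \<open>Random relabellings and cheap edges\<close>

abbreviation perms :: "nat \<Rightarrow> (nat \<Rightarrow> nat) set" where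
  "perms n \<equiv> {\<sigma>. \<sigma> permutes {..<n}}"

lemma finite_perms: "finite (perms n)"
  by (rule finite_permutations) simp

lemma card_perms: "card (perms n) = fact n"
  by (rule card_permutations) auto

definition first_in :: "(nat \<Rightarrow> nat) \<Rightarrow> nat set \<Rightarrow> nat \<Rightarrow> bool" where
  "first_in \<sigma> S x \<longleftrightarrow> (\<forall>y\<in>S. y \<noteq> x \<longrightarrow> \<sigma> x < \<sigma> y)"

lemma card_first_in_le:
  assumes S: "S \<subseteq> {..<n}" and xy: "x \<in> S" "y \<in> S"
  shows "card {\<sigma>\<in>perms n. first_in \<sigma> S x} \<le> card {\<sigma>\<in>perms n. first_in \<sigma> S y}"
proof -
  let ?\<tau> = "transpose x y"
  have "inj_on (\<lambda>\<sigma>. \<sigma> \<circ> ?\<tau>) {\<sigma>\<in>perms n. first_in \<sigma> S x}"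
  proof (rule inj_onI)
    fix \<sigma> \<rho> assume "\<sigma> \<circ> ?\<tau> = \<rho> \<circ> ?\<tau>"
    then have "\<sigma> \<circ> ?\<tau> \<circ> ?\<tau> = \<rho> \<circ> ?\<tau> \<circ> ?\<tau>" by simp
    then show "\<sigma> = \<rho>" by (simp add: comp_assoc)
  qed
  moreover have "(\<lambda>\<sigma>. \<sigma> \<circ> ?\<tau>) ` {\<sigma>\<in>perms n. first_in \<sigma> S x} \<subseteq> {\<sigma>\<in>perms n. first_in \<sigma> S y}"
  proof (rule image_subsetI)
    fix \<sigma> assume "\<sigma> \<in> {\<sigma>\<in>perms n. first_in \<sigma> S x}"
    then have \<sigma>: "\<sigma> permutes {..<n}" "first_in \<sigma> S x" by auto
    have "?\<tau> permutes {..<n}" using S xy by (intro permutes_swap_id) auto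
    then have "\<sigma> \<circ> ?\<tau> permutes {..<n}" using \<sigma>(1) by (rule permutes_compose)
    moreover have "first_in (\<sigma> \<circ> ?\<tau>) S y"
      unfolding first_in_def
    proof (intro ballI impI)
      fix z assume "z \<in> S" "z \<noteq> y"
      then show "(\<sigma> \<circ> ?\<tau>) y < (\<sigma> \<circ> ?\<tau>) z"
        using \<sigma>(2) xy by (cases "z = x") (simp_all add: first_in_def)
    qed
    ultimately show "\<sigma> \<circ> ?\<tau> \<in> {\<sigma>\<in>perms n. first_in \<sigma> S y}" by simp
  qed
  ultimately show ?thesis
    by (rule card_inj_on_le) (rule finite_subset[OF _ finite_perms], auto)
qed

lemma first_in_unique:
  "first_in \<sigma> S x \<Longrightarrow> first_in \<sigma> S y \<Longrightarrow> x \<in> S \<Longrightarrow> y \<in> S \<Longrightarrow> x = y"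
  unfolding first_in_def by (metis less_asym)

lemma ex1_first_in:
  assumes "\<sigma> permutes {..<n}" "finite S" "S \<noteq> {}"
  shows "\<exists>!x. x \<in> S \<and> first_in \<sigma> S x"
proof -
  have inj: "inj \<sigma>" using assms(1) by (rule permutes_inj)
  have "Min (\<sigma> ` S) \<in> \<sigma> ` S" using assms by (intro Min_in) auto
  then obtain x where x: "x \<in> S" "\<sigma> x = Min (\<sigma> ` S)" by auto
  have first: "first_in \<sigma> S x"
    unfolding first_in_def
  proof (intro ballI impI)
    fix y assume "y \<in> S" "y \<noteq> x"
    then have "\<sigma> x \<le> \<sigma> y" using x assms by simp
    moreover have "\<sigma> y \<noteq> \<sigma> x" using inj \<open>y \<noteq> x\<close> by (auto dest: injD)
    ultimately show "\<sigma> x < \<sigma> y" by simp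
  qed
  show ?thesis
  proof (rule ex1I[of _ x])
    fix y assume "y \<in> S \<and> first_in \<sigma> S y"
    then show "y = x" using first x first_in_unique by blast
  qed (use x first in simp)
qed

lemma card_mult_card_first_in:
  assumes S: "S \<subseteq> {..<n}" and x: "x \<in> S"
  shows "card S * card {\<sigma>\<in>perms n. first_in \<sigma> S x} = fact n"
proof -
  have finS: "finite S" using S by (rule finite_subset) simp
  have "perms n = (\<Union>y\<in>S. {\<sigma>\<in>perms n. first_in \<sigma> S y})"
    using ex1_first_in[of _ n S] finS x by blast
  then have "fact n = card (\<Union>y\<in>S. {\<sigma>\<in>perms n. first_in \<sigma> S y})" using card_perms by metis
  also have "\<dots> = (\<Sum>y\<in>S. card {\<sigma>\<in>perms n. first_in \<sigma> S y})"
    using finS finite_perms by (intro card_UN_disjoint) (auto dest: first_in_unique)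
  also have "\<dots> = (\<Sum>y\<in>S. card {\<sigma>\<in>perms n. first_in \<sigma> S x})"
    using card_first_in_le[OF S x] card_first_in_le[OF S _ x] by (intro sum.cong) (auto intro: le_antisym)
  finally show ?thesis by simp
qed

lemma card_perms_some_first:
  assumes S: "W \<union> X \<subseteq> {..<n}" and disj: "W \<inter> X = {}" and "X \<noteq> {}"
  shows "card (W \<union> X) * card {\<sigma>\<in>perms n. \<exists>w\<in>W. \<forall>z\<in>X. \<sigma> w < \<sigma> z} = card W * fact n"
proof -
  let ?S = "W \<union> X"
  have finS: "finite ?S" using S by (rule finite_subset) simp
  have "{\<sigma>\<in>perms n. \<exists>w\<in>W. \<forall>z\<in>X. \<sigma> w < \<sigma> z} = (\<Union>w\<in>W. {\<sigma>\<in>perms n. first_in \<sigma> ?S w})"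
  proof (intro equalityI subsetI)
    fix \<sigma> assume "\<sigma> \<in> {\<sigma>\<in>perms n. \<exists>w\<in>W. \<forall>z\<in>X. \<sigma> w < \<sigma> z}"
    then obtain w where w: "\<sigma> permutes {..<n}" "w \<in> W" "\<forall>z\<in>X. \<sigma> w < \<sigma> z" by auto
    obtain w0 where w0: "w0 \<in> ?S" "first_in \<sigma> ?S w0"
      using ex1_first_in[OF w(1) finS] \<open>X \<noteq> {}\<close> by blast
    have "w0 \<in> W"
    proof (rule ccontr)
      assume "w0 \<notin> W"
      then have "\<sigma> w < \<sigma> w0" "\<sigma> w0 < \<sigma> w"
        using w w0 unfolding first_in_def by auto
      then show False by simp
    qed
    then show "\<sigma> \<in> (\<Union>w\<in>W. {\<sigma>\<in>perms n. first_in \<sigma> ?S w})" using w0 w by auto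
  next
    fix \<sigma> assume "\<sigma> \<in> (\<Union>w\<in>W. {\<sigma>\<in>perms n. first_in \<sigma> ?S w})"
    then obtain w where w: "w \<in> W" "\<sigma> permutes {..<n}" "first_in \<sigma> ?S w" by auto
    have "\<sigma> w < \<sigma> z" if "z \<in> X" for z
      using that disj w unfolding first_in_def by auto
    then show "\<sigma> \<in> {\<sigma>\<in>perms n. \<exists>w\<in>W. \<forall>z\<in>X. \<sigma> w < \<sigma> z}"
      using w by auto
  qed
  moreover have "card (\<Union>w\<in>W. {\<sigma>\<in>perms n. first_in \<sigma> ?S w})
      = (\<Sum>w\<in>W. card {\<sigma>\<in>perms n. first_in \<sigma> ?S w})"
    using finS finite_perms by (intro card_UN_disjoint) (auto dest: first_in_unique)
  ultimately have "card ?S * card {\<sigma>\<in>perms n. \<exists>w\<in>W. \<forall>z\<in>X. \<sigma> w < \<sigma> z}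
      = (\<Sum>w\<in>W. card ?S * card {\<sigma>\<in>perms n. first_in \<sigma> ?S w})"
    by (simp add: sum_distrib_left)
  also have "\<dots> = (\<Sum>w\<in>W. fact n)"
    using card_mult_card_first_in[OF S] by (intro sum.cong) auto
  finally show ?thesis by simp
qed

definition relabel :: "(nat \<Rightarrow> nat) \<Rightarrow> nat set set \<Rightarrow> nat set set" where
  "relabel \<sigma> G = (\<lambda>e. \<sigma> ` e) ` G"

lemma inj_image_of_permutes: "\<sigma> permutes {..<n} \<Longrightarrow> inj ((`) \<sigma>)"
  using inj_on_image[of \<sigma> UNIV] by (simp add: permutes_inj)

lemma inj_relabel:
  assumes "\<sigma> permutes {..<n}"
  shows "inj (relabel \<sigma>)"
  using inj_on_image[of "(`) \<sigma>" UNIV] inj_image_of_permutes[OF assms]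
  unfolding relabel_def by simp

lemma image_mem_relabel_iff: "\<sigma> permutes {..<n} \<Longrightarrow> \<sigma> ` e \<in> relabel \<sigma> G \<longleftrightarrow> e \<in> G"
  unfolding relabel_def by (auto dest: injD[OF inj_image_of_permutes])

lemma card_relabel: "\<sigma> permutes {..<n} \<Longrightarrow> card (relabel \<sigma> G) = card G"
  unfolding relabel_def by (auto intro: card_image inj_on_subset[OF inj_image_of_permutes])

lemma simple_graph_relabel:
  assumes p: "\<sigma> permutes {..<n}" and sg: "simple_graph n G"
  shows "simple_graph n (relabel \<sigma> G)"
  unfolding simple_graph_def
proof
  fix e' assume "e' \<in> relabel \<sigma> G"
  then obtain e where e: "e \<in> G" "e' = \<sigma> ` e" by (auto simp: relabel_def)
  moreover have "e \<subseteq> {..<n}" "card e = 2" using simple_graph_edgeD[OF sg e(1)] by auto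
  moreover have "inj_on \<sigma> e" using p by (rule permutes_inj_on)
  ultimately show "e' \<subseteq> {..<n} \<and> card e' = 2"
    using permutes_in_image[OF p] by (auto simp: card_image)
qed

lemma regular_relabel:
  assumes p: "\<sigma> permutes {..<n}" and rg: "regular n d G"
  shows "regular n d (relabel \<sigma> G)"
  unfolding regular_def
proof (intro allI impI)
  fix v' assume "v' < n"
  define v where "v = inv \<sigma> v'"
  have v: "v < n" "v' = \<sigma> v"
    using permutes_in_image[OF permutes_inv[OF p], of v'] \<open>v' < n\<close> permutes_inverses(1)[OF p, of v']
    unfolding v_def by auto
  have "{e'\<in>relabel \<sigma> G. v' \<in> e'} = (`) \<sigma> ` {e\<in>G. \<sigma> v \<in> \<sigma> ` e}"
    unfolding relabel_def v(2) by auto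
  also have "{e\<in>G. \<sigma> v \<in> \<sigma> ` e} = {e\<in>G. v \<in> e}"
    using permutes_inj[OF p] by (simp add: inj_image_mem_iff)
  finally have "{e'\<in>relabel \<sigma> G. v' \<in> e'} = (`) \<sigma> ` {e\<in>G. v \<in> e}" .
  then have "degree (relabel \<sigma> G) v' = degree G v"
    unfolding degree_def
    by (simp add: card_image inj_on_subset[OF inj_image_of_permutes[OF p]])
  then show "degree (relabel \<sigma> G) v' = d" using rg v by (simp add: regular_def)
qed

definition cheap_edges :: "nat set set \<Rightarrow> nat set set" where
  "cheap_edges H = {e\<in>H. \<exists>w. \<forall>x\<in>e. w < x \<and> {w, x} \<in> H}"

lemma cheap_edges_relabel:
  assumes p: "\<sigma> permutes {..<n}"
  shows "cheap_edges (relabel \<sigma> G) = relabel \<sigma> {e\<in>G. \<exists>w. \<forall>x\<in>e. \<sigma> w < \<sigma> x \<and> {w, x} \<in> G}"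
proof -
  have mem: "{\<sigma> w, \<sigma> x} \<in> relabel \<sigma> G \<longleftrightarrow> {w, x} \<in> G" for w x
    using image_mem_relabel_iff[OF p, of "{w, x}" G] by simp
  have key: "(\<exists>w'. \<forall>x'\<in>\<sigma> ` e. w' < x' \<and> {w', x'} \<in> relabel \<sigma> G)
      \<longleftrightarrow> (\<exists>w. \<forall>x\<in>e. \<sigma> w < \<sigma> x \<and> {w, x} \<in> G)" for e
  proof
    assume "\<exists>w'. \<forall>x'\<in>\<sigma> ` e. w' < x' \<and> {w', x'} \<in> relabel \<sigma> G"
    then obtain w' where w': "\<forall>x'\<in>\<sigma> ` e. w' < x' \<and> {w', x'} \<in> relabel \<sigma> G" by blast
    obtain w where "w' = \<sigma> w" using permutes_surj[OF p] by (metis surjD)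
    then have "\<forall>x\<in>e. \<sigma> w < \<sigma> x \<and> {w, x} \<in> G" using w' mem by auto
    then show "\<exists>w. \<forall>x\<in>e. \<sigma> w < \<sigma> x \<and> {w, x} \<in> G" by blast
  qed (use mem in auto)
  have "cheap_edges (relabel \<sigma> G)
      = (`) \<sigma> ` {e\<in>G. \<exists>w'. \<forall>x'\<in>\<sigma> ` e. w' < x' \<and> {w', x'} \<in> relabel \<sigma> G}"
    unfolding cheap_edges_def by (subst (1) relabel_def) (rule Compr_image_eq)
  also have "\<dots> = relabel \<sigma> {e\<in>G. \<exists>w. \<forall>x\<in>e. \<sigma> w < \<sigma> x \<and> {w, x} \<in> G}"
    unfolding key by (simp only: relabel_def)
  finally show ?thesis .
qed

lemma card_cheap_edges_le: "simple_graph n H \<Longrightarrow> card (cheap_edges H) \<le> card H"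
  unfolding cheap_edges_def by (intro card_mono) (auto dest: simple_graph_finite)

lemma card_perms_cheap_edge:
  assumes sg: "simple_graph n G" and e: "{x, y} \<in> G"
  shows "real (card {\<sigma>\<in>perms n. \<exists>w. \<forall>z\<in>{x, y}. \<sigma> w < \<sigma> z \<and> {w, z} \<in> G})
     = real (card (common_neighbours G x y)) * fact n / (real (card (common_neighbours G x y)) + 2)"
proof -
  let ?W = "common_neighbours G x y"
  have xy: "x \<noteq> y" "x < n" "y < n" using simple_graph_doubletonD[OF sg e] by auto
  have sub: "?W \<union> {x, y} \<subseteq> {..<n}"
    using xy simple_graph_doubletonD[OF sg] by (auto simp: common_neighbours_def)
  have disj: "?W \<inter> {x, y} = {}"
    using simple_graph_doubletonD[OF sg, of x x] simple_graph_doubletonD[OF sg, of y y]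
    by (auto simp: common_neighbours_def)
  have "card (?W \<union> {x, y}) = card ?W + 2"
    using disj xy finite_subset[OF sub] by (simp add: card_Un_disjoint)
  moreover have "{\<sigma>\<in>perms n. \<exists>w. \<forall>z\<in>{x, y}. \<sigma> w < \<sigma> z \<and> {w, z} \<in> G}
      = {\<sigma>\<in>perms n. \<exists>w\<in>?W. \<forall>z\<in>{x, y}. \<sigma> w < \<sigma> z}"
    unfolding common_neighbours_def by blast
  ultimately have "(card ?W + 2) * card {\<sigma>\<in>perms n. \<exists>w. \<forall>z\<in>{x, y}. \<sigma> w < \<sigma> z \<and> {w, z} \<in> G}
      = card ?W * fact n"
    using card_perms_some_first[OF sub disj] by simp
  then have "real ((card ?W + 2) * card {\<sigma>\<in>perms n. \<exists>w. \<forall>z\<in>{x, y}. \<sigma> w < \<sigma> z \<and> {w, z} \<in> G})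
      = real (card ?W * fact n)"
    by (rule arg_cong)
  then have "(real (card ?W) + 2) * real (card {\<sigma>\<in>perms n. \<exists>w. \<forall>z\<in>{x, y}. \<sigma> w < \<sigma> z \<and> {w, z} \<in> G})
      = real (card ?W) * fact n"
    by (simp only: of_nat_mult of_nat_add of_nat_fact) simp
  then show ?thesis by (simp add: eq_divide_eq mult.commute)
qed

lemma sum_card_cheap_edges_relabel:
  assumes sg: "simple_graph n G"
  shows "(\<Sum>\<sigma>\<in>perms n. real (card (cheap_edges (relabel \<sigma> G))))
     = fact n * (\<Sum>e\<in>G. real (edge_triangles n G e) / (real (edge_triangles n G e) + 2))"
proof -
  let ?cheap_under = "\<lambda>\<sigma> e. \<exists>w. \<forall>x\<in>e. \<sigma> w < \<sigma> x \<and> {w, x} \<in> G"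
  have "(\<Sum>\<sigma>\<in>perms n. card (cheap_edges (relabel \<sigma> G)))
      = (\<Sum>\<sigma>\<in>perms n. card {e\<in>G. ?cheap_under \<sigma> e})"
    by (intro sum.cong) (auto simp: cheap_edges_relabel card_relabel)
  also have "\<dots> = (\<Sum>e\<in>G. card {\<sigma>\<in>perms n. ?cheap_under \<sigma> e})"
    using finite_perms simple_graph_finite[OF sg] by (rule sum_card_filter_swap)
  finally have "(\<Sum>\<sigma>\<in>perms n. real (card (cheap_edges (relabel \<sigma> G))))
      = (\<Sum>e\<in>G. real (card {\<sigma>\<in>perms n. ?cheap_under \<sigma> e}))"
    unfolding of_nat_sum[symmetric] by (rule arg_cong)
  also have "\<dots> = (\<Sum>e\<in>G. fact n * (real (edge_triangles n G e) / (real (edge_triangles n G e) + 2)))"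
  proof (rule sum.cong)
    fix e assume "e \<in> G"
    then obtain x y where "e = {x, y}" using simple_graph_edgeE[OF sg] by blast
    with \<open>e \<in> G\<close> show "real (card {\<sigma>\<in>perms n. ?cheap_under \<sigma> e})
       = fact n * (real (edge_triangles n G e) / (real (edge_triangles n G e) + 2))"
      using card_perms_cheap_edge[OF sg] edge_triangles_eq_card_common_neighbours[OF sg] by simp
  qed simp
  finally show ?thesis by (simp add: sum_distrib_left)
qed

definition cheap_fraction :: "nat \<Rightarrow> real \<Rightarrow> real \<Rightarrow> real \<Rightarrow> real" where
  "cheap_fraction d c \<epsilon> \<delta> = c * (real d - 1) / (real d + 1) + \<epsilon> * \<delta> * real d / (3 * real d + 3)"

lemma cheap_fraction_nonneg: "d \<ge> 1 \<Longrightarrow> c > 0 \<Longrightarrow> \<epsilon> > 0 \<Longrightarrow> \<delta> > 0 \<Longrightarrow> cheap_fraction d c \<epsilon> \<delta> \<ge> 0"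
  unfolding cheap_fraction_def by (intro add_nonneg_nonneg) auto

lemma G_badD:
  assumes "G \<in> G_bad n d c \<epsilon> \<delta>"
  shows "simple_graph n G" "regular n d G" "c * T_max d n \<le> real (num_triangles n G)"
    "\<epsilon> * (real d / 2) * real n \<le> real (card {e. bad_edge n d \<delta> G e})"
  using assms by (auto simp: G_bad_def G_dc_def)

lemma cheap_probability_ge:
  assumes sg: "simple_graph n G" and rg: "regular n d G" and "e \<in> G" "d \<ge> 1" "\<delta> > 0"
  shows "real (edge_triangles n G e) / (real d + 1)
      + (if bad_edge n d \<delta> G e then \<delta> * real d / (3 * (real d + 1)) else 0)
    \<le> real (edge_triangles n G e) / (real (edge_triangles n G e) + 2)"
proof -
  obtain x y where "e = {x, y}" using simple_graph_edgeE[OF sg \<open>e \<in> G\<close>] by blast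
  then have "edge_triangles n G e < d"
    using card_common_neighbours_less[OF sg rg] edge_triangles_eq_card_common_neighbours[OF sg]
      \<open>e \<in> G\<close> by simp
  then have "real (edge_triangles n G e) + 1 \<le> real d" by linarith
  then show ?thesis
    using divide_add_two_ge_bad[of "real (edge_triangles n G e)" "real d" \<delta>]
      divide_add_two_ge[of "real (edge_triangles n G e)" "real d"] assms(4,5)
    by (auto simp: bad_edge_def)
qed

lemma sum_cheap_probability_ge:
  assumes G: "G \<in> G_bad n d c \<epsilon> \<delta>" and "d \<ge> 1" "c > 0" "\<delta> > 0"
  shows "cheap_fraction d c \<epsilon> \<delta> * real (card G)
    \<le> (\<Sum>e\<in>G. real (edge_triangles n G e) / (real (edge_triangles n G e) + 2))"
proof -
  note G_props = G_badD[OF G]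
  have sg: "simple_graph n G" and rg: "regular n d G" using G_props by auto
  let ?t = "\<lambda>e. real (edge_triangles n G e)"
  let ?Bad = "{e. bad_edge n d \<delta> G e}"
  let ?k = "\<delta> * real d / (3 * (real d + 1))"
  have m: "real (card G) = real n * real d / 2" using real_card_regular[OF sg rg] .
  have "?Bad \<subseteq> G" by (auto simp: bad_edge_def)
  have sum_t: "(\<Sum>e\<in>G. ?t e) = 3 * real (num_triangles n G)"
    using arg_cong[OF sum_edge_triangles[OF sg], of real] by simp
  have triangles: "c * (real d - 1) / (real d + 1) * real (card G) \<le> (\<Sum>e\<in>G. ?t e) / (real d + 1)"
  proof -
    have "c * real d * (real d - 1) * real n / 2 \<le> 3 * real (num_triangles n G)"
      using G_props(3) unfolding T_max_def real_choose_two by simp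
    then have "c * real d * (real d - 1) * real n / 2 / (real d + 1)
        \<le> 3 * real (num_triangles n G) / (real d + 1)"
      by (rule divide_right_mono) simp
    moreover have "c * (real d - 1) / (real d + 1) * real (card G)
        = c * real d * (real d - 1) * real n / 2 / (real d + 1)"
      unfolding m by (simp add: ac_simps)
    ultimately show ?thesis using sum_t by simp
  qed
  have bad: "\<epsilon> * \<delta> * real d / (3 * real d + 3) * real (card G) \<le> real (card ?Bad) * ?k"
    using mult_right_mono[OF G_props(4), of ?k] \<open>\<delta> > 0\<close> unfolding m by (simp add: field_simps)
  have "cheap_fraction d c \<epsilon> \<delta> * real (card G)
      \<le> (\<Sum>e\<in>G. ?t e) / (real d + 1) + real (card ?Bad) * ?k"
    using triangles bad unfolding cheap_fraction_def by (simp add: algebra_simps)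
  also have "\<dots> = (\<Sum>e\<in>G. ?t e / (real d + 1) + (if e \<in> ?Bad then ?k else 0))"
    using simple_graph_finite[OF sg] \<open>?Bad \<subseteq> G\<close>
    by (simp add: sum.distrib sum_divide_distrib sum.If_cases Int_absorb1)
  also have "\<dots> \<le> (\<Sum>e\<in>G. ?t e / (?t e + 2))"
    using cheap_probability_ge[OF sg rg _ assms(2,4)] by (intro sum_mono) simp
  finally show ?thesis .
qed

lemma card_perms_many_cheap_edges:
  fixes n d :: nat and c \<epsilon> \<delta> :: real
  assumes G: "G \<in> G_bad n d c \<epsilon> \<delta>" and "d \<ge> 1" "c > 0" "\<delta> > 0" "\<epsilon> > 0"
  defines "m \<equiv> real n * real d / 2"
  shows "fact n \<le> real (card {\<sigma>\<in>perms n.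
    cheap_fraction d c \<epsilon> \<delta> * m - 1 \<le> real (card (cheap_edges (relabel \<sigma> G)))}) * (m + 1)"
proof -
  have sg: "simple_graph n G" and rg: "regular n d G" using G_badD[OF G] by auto
  let ?X = "\<lambda>\<sigma>. real (card (cheap_edges (relabel \<sigma> G)))"
  have "?X \<sigma> \<le> m" if "\<sigma> \<in> perms n" for \<sigma>
    using card_cheap_edges_le[OF simple_graph_relabel[OF _ sg], of \<sigma>] card_relabel[of \<sigma> n G]
      real_card_regular[OF sg rg] that unfolding m_def by simp
  moreover have "real (card (perms n)) * (cheap_fraction d c \<epsilon> \<delta> * m) \<le> (\<Sum>\<sigma>\<in>perms n. ?X \<sigma>)"
    using sum_cheap_probability_ge[OF G assms(2-4)] real_card_regular[OF sg rg]
    unfolding sum_card_cheap_edges_relabel[OF sg] card_perms m_def by simp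
  ultimately show ?thesis
    using reverse_markov_card[OF finite_perms] cheap_fraction_nonneg[OF assms(2,3,5,4)]
    unfolding card_perms m_def by simp
qed

lemma card_G_bad_le:
  fixes n d :: nat and c \<epsilon> \<delta> :: real
  assumes "d \<ge> 1" "c > 0" "\<delta> > 0" "\<epsilon> > 0"
  defines "m \<equiv> real n * real d / 2"
  shows "real (card (G_bad n d c \<epsilon> \<delta>)) \<le> (m + 1) * real (card
    {H. simple_graph n H \<and> regular n d H \<and> cheap_fraction d c \<epsilon> \<delta> * m - 1 \<le> real (card (cheap_edges H))})"
    (is "_ \<le> _ * real (card ?K)")
proof -
  let ?GB = "G_bad n d c \<epsilon> \<delta>"
  have m0: "m \<ge> 0" unfolding m_def by simp
  have finGB: "finite ?GB"
    by (rule finite_subset[OF _ finite_simple_graphs]) (auto simp: G_bad_def G_dc_def)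
  have many: "fact n \<le> real (card {\<sigma>\<in>perms n. relabel \<sigma> G \<in> ?K}) * (m + 1)" if G: "G \<in> ?GB" for G
  proof -
    have sg: "simple_graph n G" and rg: "regular n d G" using G_badD[OF G] by auto
    have "card {\<sigma>\<in>perms n. cheap_fraction d c \<epsilon> \<delta> * m - 1 \<le> real (card (cheap_edges (relabel \<sigma> G)))}
        \<le> card {\<sigma>\<in>perms n. relabel \<sigma> G \<in> ?K}"
      using simple_graph_relabel[OF _ sg] regular_relabel[OF _ rg]
      by (intro card_mono) (auto simp: finite_perms)
    then have "real (card {\<sigma>\<in>perms n. cheap_fraction d c \<epsilon> \<delta> * m - 1
          \<le> real (card (cheap_edges (relabel \<sigma> G)))}) * (m + 1)
        \<le> real (card {\<sigma>\<in>perms n. relabel \<sigma> G \<in> ?K}) * (m + 1)"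
      using m0 by (intro mult_right_mono) simp_all
    with card_perms_many_cheap_edges[OF G assms(1-4)] show ?thesis
      unfolding m_def by linarith
  qed
  have "real (card ?GB) * fact n = (\<Sum>G\<in>?GB. fact n)" by simp
  also have "\<dots> \<le> (\<Sum>G\<in>?GB. real (card {\<sigma>\<in>perms n. relabel \<sigma> G \<in> ?K}) * (m + 1))"
    using many by (rule sum_mono)
  also have "\<dots> = (m + 1) * real (\<Sum>G\<in>?GB. card {\<sigma>\<in>perms n. relabel \<sigma> G \<in> ?K})"
    by (simp only: of_nat_sum sum_distrib_left mult.commute)
  also have "\<dots> = (m + 1) * real (\<Sum>\<sigma>\<in>perms n. card {G\<in>?GB. relabel \<sigma> G \<in> ?K})"
    by (simp only: sum_card_filter_swap[OF finGB finite_perms])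
  also have "\<dots> \<le> (m + 1) * real (\<Sum>\<sigma>\<in>perms n. card ?K)"
  proof (intro mult_left_mono of_nat_mono sum_mono)
    fix \<sigma> assume "\<sigma> \<in> perms n"
    then have "inj_on (relabel \<sigma>) {G\<in>?GB. relabel \<sigma> G \<in> ?K}"
      using inj_relabel by (blast intro: inj_on_subset)
    then show "card {G\<in>?GB. relabel \<sigma> G \<in> ?K} \<le> card ?K"
      by (rule card_inj_on_le) (auto intro: finite_subset[OF _ finite_simple_graphs])
  qed (use m0 in simp)
  also have "\<dots> = (m + 1) * real (card ?K) * fact n"
    by (simp add: card_perms)
  finally show ?thesis by simp
qed

section \<open>Encoding graphs by forward neighbourhoods\<close>

text \<open>The forward neighbourhoods \<open>f u\<close> are chosen for \<open>u = 0, 1, \<dots>\<close> in turn. When \<open>f u\<close> is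
  chosen, the earlier neighbours of \<open>u\<close> and all their neighbours are already determined by \<open>f\<close>
  below \<open>u\<close>; they form \<open>second_neighbours_before f u\<close>, which contains the far end \<open>v\<close> of every
  cheap edge \<open>{u, v}\<close> with \<open>u < v\<close>.\<close>

definition forward_neighbours :: "nat set set \<Rightarrow> nat \<Rightarrow> nat set" where
  "forward_neighbours H u = {v. u < v \<and> {u, v} \<in> H}"

definition neighbours_from :: "(nat \<Rightarrow> nat set) \<Rightarrow> nat \<Rightarrow> nat set" where
  "neighbours_from f w = f w \<union> {x. x < w \<and> w \<in> f x}"

definition second_neighbours_before :: "(nat \<Rightarrow> nat set) \<Rightarrow> nat \<Rightarrow> nat set" where
  "second_neighbours_before f u = (\<Union>w\<in>{w. w < u \<and> u \<in> f w}. neighbours_from f w)"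

definition has_profile :: "nat \<Rightarrow> nat set set \<Rightarrow> (nat \<Rightarrow> nat \<times> nat) \<Rightarrow> bool" where
  "has_profile n H p \<longleftrightarrow> (\<forall>u<n. \<exists>A B. forward_neighbours H u = A \<union> B \<and> A \<inter> B = {}
      \<and> A \<subseteq> second_neighbours_before (forward_neighbours H) u \<and> card A = fst (p u)
      \<and> B \<subseteq> {..<n} \<and> card B = snd (p u))"

text \<open>The guard on \<open>card (second_neighbours_before f u)\<close> holds for \<open>d\<close>-regular graphs, because
  \<open>u\<close> has \<open>d - fst (p u) - snd (p u)\<close> earlier neighbours; it makes the number of choices
  independent of \<open>f\<close>.\<close>

definition profile_choices ::
    "nat \<Rightarrow> nat \<Rightarrow> (nat \<Rightarrow> nat \<times> nat) \<Rightarrow> nat \<Rightarrow> (nat \<Rightarrow> nat set) \<Rightarrow> nat set set" where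
  "profile_choices n d p u f =
    (if finite (second_neighbours_before f u)
        \<and> card (second_neighbours_before f u) \<le> d * (d - fst (p u) - snd (p u))
     then (\<lambda>(A, B). A \<union> B) `
       ({A. A \<subseteq> second_neighbours_before f u \<and> card A = fst (p u)}
        \<times> {B. B \<subseteq> {..<n} \<and> card B = snd (p u)})
     else {})"

definition profile_bound :: "nat \<Rightarrow> nat \<Rightarrow> (nat \<Rightarrow> nat \<times> nat) \<Rightarrow> nat \<Rightarrow> nat" where
  "profile_bound n d p u = ((d * (d - fst (p u) - snd (p u))) choose fst (p u)) * (n choose snd (p u))"

definition profile_weight :: "nat \<Rightarrow> nat \<Rightarrow> (nat \<Rightarrow> nat \<times> nat) \<Rightarrow> real" where
  "profile_weight n d p = (\<Sum>u<n. real (fst (p u))) * ln (real d)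
     + (\<Sum>u<n. real (snd (p u))) * ln (real n / real d)"

lemma has_profileE:
  assumes "has_profile n H p" "u < n"
  obtains A B where "forward_neighbours H u = A \<union> B" "A \<inter> B = {}"
    "A \<subseteq> second_neighbours_before (forward_neighbours H) u" "card A = fst (p u)"
    "B \<subseteq> {..<n}" "card B = snd (p u)"
  using assms unfolding has_profile_def by (elim allE impE exE conjE) (assumption | blast)+

lemma profile_choices_cong:
  assumes "\<forall>w<u. f w = g w"
  shows "profile_choices n d p u f = profile_choices n d p u g"
proof -
  have "neighbours_from f w = neighbours_from g w" if "w < u" for w
    using assms that unfolding neighbours_from_def by auto
  moreover have "{w. w < u \<and> u \<in> f w} = {w. w < u \<and> u \<in> g w}" using assms by auto
  ultimately show ?thesis unfolding profile_choices_def second_neighbours_before_def by auto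
qed

lemma finite_subsets_card: "finite U \<Longrightarrow> finite {A. A \<subseteq> U \<and> card A = k}"
  by (rule finite_subset[of _ "Pow U"]) auto

lemma finite_profile_choices: "finite (profile_choices n d p u f)"
  unfolding profile_choices_def by (auto intro: finite_subsets_card)

lemma card_profile_choices_le: "card (profile_choices n d p u f) \<le> profile_bound n d p u"
proof (cases "finite (second_neighbours_before f u)
    \<and> card (second_neighbours_before f u) \<le> d * (d - fst (p u) - snd (p u))")
  case True
  let ?U = "second_neighbours_before f u" and ?a = "fst (p u)" and ?b = "snd (p u)"
  let ?AB = "{A. A \<subseteq> ?U \<and> card A = ?a} \<times> {B. B \<subseteq> {..<n} \<and> card B = ?b}"
  have "finite ?AB" using True by (auto intro: finite_subsets_card)
  then have "card (profile_choices n d p u f) \<le> card ?AB"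
    unfolding profile_choices_def using True card_image_le[of ?AB "\<lambda>(A, B). A \<union> B"] by simp
  also have "\<dots> = (card ?U choose ?a) * (n choose ?b)"
    using True by (simp add: card_cartesian_product n_subsets)
  also have "\<dots> \<le> profile_bound n d p u"
    unfolding profile_bound_def using True by (intro mult_right_mono binomial_right_mono) auto
  finally show ?thesis .
next
  case False
  then show ?thesis unfolding profile_choices_def by (simp only: if_False card.empty)
qed

lemma forward_neighbours_subset: "forward_neighbours H u \<subseteq> neighbours H u"
  by (auto simp: forward_neighbours_def neighbours_def)

lemma forward_neighbours_subset_lessThan:
  "simple_graph n H \<Longrightarrow> forward_neighbours H u \<subseteq> {..<n}"
  using forward_neighbours_subset neighbours_subset by blast

lemma forward_neighbours_eq_empty: "simple_graph n H \<Longrightarrow> n \<le> u \<Longrightarrow> forward_neighbours H u = {}"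
  by (auto simp: forward_neighbours_def dest: simple_graph_doubletonD)

lemma edges_eq_forward_neighbours:
  assumes "simple_graph n H"
  shows "H = {{u, v} |u v. v \<in> forward_neighbours H u}"
proof
  show "H \<subseteq> {{u, v} |u v. v \<in> forward_neighbours H u}"
  proof
    fix e assume "e \<in> H"
    then obtain x y where "e = {x, y}" "x < y" using simple_graph_edgeE[OF assms] by blast
    with \<open>e \<in> H\<close> show "e \<in> {{u, v} |u v. v \<in> forward_neighbours H u}"
      unfolding forward_neighbours_def by blast
  qed
qed (auto simp: forward_neighbours_def)

lemma inj_on_forward_neighbours: "inj_on forward_neighbours {H. simple_graph n H}"
proof (rule inj_onI)
  fix H1 H2 assume "H1 \<in> {H. simple_graph n H}" "H2 \<in> {H. simple_graph n H}"
    "forward_neighbours H1 = forward_neighbours H2"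
  then show "H1 = H2"
    using edges_eq_forward_neighbours[of n H1] edges_eq_forward_neighbours[of n H2] by simp
qed

lemma neighbours_from_forward_neighbours:
  assumes sg: "simple_graph n H"
  shows "neighbours_from (forward_neighbours H) w = neighbours H w"
proof (rule set_eqI)
  fix x
  have "x \<noteq> w" if "{w, x} \<in> H" using simple_graph_doubletonD[OF sg that] by simp
  moreover have "x \<in> neighbours_from (forward_neighbours H) w
      \<longleftrightarrow> (w < x \<and> {w, x} \<in> H) \<or> (x < w \<and> {w, x} \<in> H)"
    unfolding neighbours_from_def forward_neighbours_def by (auto simp: insert_commute)
  ultimately show "x \<in> neighbours_from (forward_neighbours H) w \<longleftrightarrow> x \<in> neighbours H w"
    unfolding neighbours_def by (auto dest: linorder_neqE_nat)
qed

lemma mem_second_neighbours_before_iff: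
  assumes sg: "simple_graph n H"
  shows "v \<in> second_neighbours_before (forward_neighbours H) u
    \<longleftrightarrow> (\<exists>w. w < u \<and> {w, u} \<in> H \<and> {w, v} \<in> H)"
  unfolding second_neighbours_before_def neighbours_from_forward_neighbours[OF sg]
  by (auto simp: forward_neighbours_def neighbours_def)

lemma card_second_neighbours_before_le:
  assumes sg: "simple_graph n H" and rg: "regular n d H" and u: "u < n"
    and AB: "forward_neighbours H u = A \<union> B" "A \<inter> B = {}"
  shows "finite (second_neighbours_before (forward_neighbours H) u)
    \<and> card (second_neighbours_before (forward_neighbours H) u) \<le> d * (d - card A - card B)"
proof -
  let ?Bk = "{w. w < u \<and> u \<in> forward_neighbours H w}"
  have finN: "finite (neighbours H w)" for w
    using neighbours_subset[OF sg] by (rule finite_subset) simp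
  have "neighbours H u = ?Bk \<union> forward_neighbours H u"
    using neighbours_from_forward_neighbours[OF sg, of u] unfolding neighbours_from_def by auto
  moreover have "?Bk \<inter> forward_neighbours H u = {}" by (auto simp: forward_neighbours_def)
  ultimately have "card ?Bk + card (forward_neighbours H u) = d"
    using regular_card_neighbours[OF sg rg u] finN[of u] by (metis card_Un_disjoint finite_Un)
  moreover have "card (forward_neighbours H u) = card A + card B"
    using AB finite_subset[OF forward_neighbours_subset finN] by (metis card_Un_disjoint finite_Un)
  ultimately have card_Bk: "card ?Bk = d - card A - card B" by simp
  have nbrs: "neighbours_from (forward_neighbours H) w = neighbours H w" "card (neighbours H w) = d"
    if "w \<in> ?Bk" for w
  proof -
    from that u have "w < n" by simp
    then show "neighbours_from (forward_neighbours H) w = neighbours H w" "card (neighbours H w) = d"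
      using neighbours_from_forward_neighbours[OF sg] regular_card_neighbours[OF sg rg] by simp_all
  qed
  have finBk: "finite ?Bk" by (rule finite_subset[of _ "{..<u}"]) auto
  then have "finite (second_neighbours_before (forward_neighbours H) u)"
    unfolding second_neighbours_before_def using nbrs finN by auto
  moreover have "card (second_neighbours_before (forward_neighbours H) u)
      \<le> (\<Sum>w\<in>?Bk. card (neighbours_from (forward_neighbours H) w))"
    unfolding second_neighbours_before_def using finBk by (rule card_UN_le)
  moreover have "(\<Sum>w\<in>?Bk. card (neighbours_from (forward_neighbours H) w)) = card ?Bk * d"
    using nbrs by simp
  ultimately show ?thesis using card_Bk by (simp add: mult.commute)
qed

lemma card_has_profile_le:
  "card {H. simple_graph n H \<and> regular n d H \<and> has_profile n H p} \<le> (\<Prod>u<n. profile_bound n d p u)"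
proof -
  let ?T = "{H. simple_graph n H \<and> regular n d H \<and> has_profile n H p}"
  let ?S = "{f. (\<forall>u<n. f u \<in> profile_choices n d p u f) \<and> (\<forall>u\<ge>n. f u = {})}"
  have S: "finite ?S \<and> card ?S \<le> (\<Prod>u<n. profile_bound n d p u)"
    by (rule card_sequential_choices_le[of "profile_choices n d p" "profile_bound n d p"])
      (simp_all add: profile_choices_cong finite_profile_choices card_profile_choices_le)
  have "forward_neighbours ` ?T \<subseteq> ?S"
  proof (rule image_subsetI)
    fix H assume "H \<in> ?T"
    then have H: "simple_graph n H" "regular n d H" "has_profile n H p" by auto
    have "forward_neighbours H u \<in> profile_choices n d p u (forward_neighbours H)" if "u < n" for u
    proof -
      obtain A B where AB: "forward_neighbours H u = A \<union> B" "A \<inter> B = {}"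
        "A \<subseteq> second_neighbours_before (forward_neighbours H) u" "card A = fst (p u)"
        "B \<subseteq> {..<n}" "card B = snd (p u)"
        by (rule has_profileE[OF H(3) \<open>u < n\<close>])
      have "forward_neighbours H u \<in> (\<lambda>(A, B). A \<union> B) `
          ({A. A \<subseteq> second_neighbours_before (forward_neighbours H) u \<and> card A = fst (p u)}
           \<times> {B. B \<subseteq> {..<n} \<and> card B = snd (p u)})"
        using AB by (intro image_eqI[of _ _ "(A, B)"]) auto
      then show ?thesis
        using card_second_neighbours_before_le[OF H(1,2) \<open>u < n\<close> AB(1,2)] AB(4,6)
        unfolding profile_choices_def by simp
    qed
    then show "forward_neighbours H \<in> ?S" using forward_neighbours_eq_empty[OF H(1)] by simp
  qed
  moreover have "inj_on forward_neighbours ?T"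
    using inj_on_forward_neighbours by (rule inj_on_subset) auto
  ultimately have "card ?T \<le> card ?S"
    using S card_inj_on_le by blast
  with S show ?thesis by linarith
qed

lemma profile_bound_le:
  assumes "d \<ge> 1"
  shows "real (profile_bound n d p u)
    \<le> real d ^ fst (p u) * (real n / real d) ^ snd (p u) * exp (2 * real d)"
proof -
  let ?a = "fst (p u)" and ?b = "snd (p u)"
  let ?k = "d - ?a - ?b"
  have "real ((d * ?k) choose ?a) \<le> real d ^ ?a * (real ?k ^ ?a / fact ?a)"
    using binomial_le_power_div_fact[of "d * ?k" ?a] by (simp add: power_mult_distrib)
  also have "\<dots> \<le> real d ^ ?a * exp (real d)"
  proof (intro mult_left_mono)
    have "real ?k ^ ?a / fact ?a \<le> exp (real ?k)" by (rule power_div_fact_le_exp) simp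
    also have "\<dots> \<le> exp (real d)" by simp
    finally show "real ?k ^ ?a / fact ?a \<le> exp (real d)" .
  qed simp
  finally have 1: "real ((d * ?k) choose ?a) \<le> real d ^ ?a * exp (real d)" .
  have "real (n choose ?b) \<le> (real n / real d) ^ ?b * (real d ^ ?b / fact ?b)"
    using binomial_le_power_div_fact[of n ?b] assms by (simp add: power_divide)
  also have "\<dots> \<le> (real n / real d) ^ ?b * exp (real d)"
    by (intro mult_left_mono power_div_fact_le_exp) auto
  finally have 2: "real (n choose ?b) \<le> (real n / real d) ^ ?b * exp (real d)" .
  have "real (profile_bound n d p u) \<le> (real d ^ ?a * exp (real d)) * ((real n / real d) ^ ?b * exp (real d))"
    unfolding profile_bound_def of_nat_mult using 1 2 by (intro mult_mono) auto
  also have "\<dots> = real d ^ ?a * (real n / real d) ^ ?b * (exp (real d) * exp (real d))"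
    by (simp only: mult_ac)
  also have "exp (real d) * exp (real d) = exp (2 * real d)"
    by (simp only: exp_add[symmetric] mult_2)
  finally show ?thesis .
qed

lemma prod_profile_bound_le:
  assumes "d \<ge> 1" "n \<ge> 1"
  shows "real (\<Prod>u<n. profile_bound n d p u) \<le> exp (profile_weight n d p + 2 * real d * real n)"
proof -
  have "real (\<Prod>u<n. profile_bound n d p u)
      \<le> (\<Prod>u<n. real d ^ fst (p u) * (real n / real d) ^ snd (p u) * exp (2 * real d))"
    unfolding of_nat_prod by (intro prod_mono) (use profile_bound_le[OF assms(1)] in auto)
  also have "\<dots> = (\<Prod>u<n. exp (real (fst (p u)) * ln (real d)
      + real (snd (p u)) * ln (real n / real d) + 2 * real d))"
    using assms by (intro prod.cong) (simp_all add: exp_add exp_of_nat_mult del: exp_ln_iff)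
  also have "\<dots> = exp (\<Sum>u<n. real (fst (p u)) * ln (real d)
      + real (snd (p u)) * ln (real n / real d) + 2 * real d)"
    by (rule exp_sum[symmetric]) simp
  also have "\<dots> = exp (profile_weight n d p + 2 * real d * real n)"
    unfolding profile_weight_def by (simp add: sum.distrib sum_distrib_right)
  finally show ?thesis .
qed

lemma has_profile_le_degree:
  assumes sg: "simple_graph n H" and rg: "regular n d H" and "has_profile n H p" "u < n"
  shows "fst (p u) \<le> d \<and> snd (p u) \<le> d"
proof -
  obtain A B where AB: "forward_neighbours H u = A \<union> B" "A \<inter> B = {}"
    "A \<subseteq> second_neighbours_before (forward_neighbours H) u" "card A = fst (p u)"
    "B \<subseteq> {..<n}" "card B = snd (p u)"
    by (rule has_profileE[OF assms(3,4)])
  have finN: "finite (neighbours H u)"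
    using neighbours_subset[OF sg] by (rule finite_subset) simp
  then have "card (forward_neighbours H u) \<le> card (neighbours H u)"
    using forward_neighbours_subset by (rule card_mono)
  then have "card (forward_neighbours H u) \<le> d"
    using regular_card_neighbours[OF sg rg \<open>u < n\<close>] by simp
  moreover have "finite (A \<union> B)"
    using AB(1) finite_subset[OF forward_neighbours_subset finN] by simp
  then have "card A \<le> card (A \<union> B)" "card B \<le> card (A \<union> B)" by (simp_all add: card_mono)
  ultimately show ?thesis using AB by simp
qed

lemma has_profile_restrict:
  assumes "simple_graph n H" "regular n d H" "has_profile n H p"
  shows "restrict p {..<n} \<in> PiE {..<n} (\<lambda>_. {0..d} \<times> {0..d})"
    "has_profile n H (restrict p {..<n})"
    "profile_weight n d (restrict p {..<n}) = profile_weight n d p"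
  using has_profile_le_degree[OF assms] assms(3)
  by (simp_all add: PiE_iff mem_Times_iff has_profile_def profile_weight_def)

lemma card_has_profile_le_exp:
  assumes "d \<ge> 1" "n \<ge> 1"
  shows "real (card {H. simple_graph n H \<and> regular n d H \<and> has_profile n H p})
    \<le> exp (profile_weight n d p + 2 * real d * real n)"
proof -
  have "real (card {H. simple_graph n H \<and> regular n d H \<and> has_profile n H p})
      \<le> real (\<Prod>u<n. profile_bound n d p u)"
    unfolding of_nat_le_iff by (rule card_has_profile_le)
  also have "\<dots> \<le> exp (profile_weight n d p + 2 * real d * real n)"
    by (rule prod_profile_bound_le[OF assms])
  finally show ?thesis .
qed

lemma card_profiles_le_exp: "real (card (PiE {..<n} (\<lambda>_. {0..d} \<times> {0..d}))) \<le> exp (2 * real d * real n)"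
proof -
  have "card (PiE {..<n} (\<lambda>_. {0..d} \<times> {0..d})) = ((d + 1) * (d + 1)) ^ n"
    by (simp add: card_PiE)
  also have "real (((d + 1) * (d + 1)) ^ n) = (real d + 1) ^ (2 * n)"
    by (simp only: of_nat_power of_nat_mult of_nat_add of_nat_1 power_mult power2_eq_square)
  also have "\<dots> \<le> exp (real d) ^ (2 * n)"
    using exp_ge_add_one_self[of "real d"] by (intro power_mono) (simp_all add: add.commute)
  also have "\<dots> = exp (2 * real d * real n)"
    by (simp add: exp_of_nat_mult[symmetric] mult_ac)
  finally show ?thesis .
qed

lemma card_le_exp_profile_weight:
  assumes "d \<ge> 1" "n \<ge> 1"
    and S: "\<And>H. H \<in> S \<Longrightarrow> simple_graph n H \<and> regular n d H
      \<and> (\<exists>p. has_profile n H p \<and> profile_weight n d p \<le> R)"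
  shows "real (card S) \<le> exp (R + 4 * real d * real n)"
proof -
  define Prof where "Prof = PiE {..<n} (\<lambda>_. {0..d} \<times> {0..d})"
  define T where "T p = {H. simple_graph n H \<and> regular n d H \<and> has_profile n H p}" for p
  let ?P = "{p\<in>Prof. profile_weight n d p \<le> R}"
  have finProf: "finite Prof" unfolding Prof_def by (intro finite_PiE) auto
  have "S \<subseteq> (\<Union>p\<in>?P. T p)"
  proof
    fix H assume "H \<in> S"
    then obtain p where sg: "simple_graph n H" and rg: "regular n d H"
      and p: "has_profile n H p" "profile_weight n d p \<le> R"
      using S by blast
    then show "H \<in> (\<Union>p\<in>?P. T p)"
      using has_profile_restrict[OF sg rg p(1)] unfolding T_def Prof_def
      by (intro UN_I[of "restrict p {..<n}"]) auto
  qed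
  moreover have "finite (\<Union>p\<in>?P. T p)"
    by (rule finite_subset[OF _ finite_simple_graphs]) (auto simp: T_def)
  ultimately have "card S \<le> card (\<Union>p\<in>?P. T p)" by (rule card_mono[rotated])
  also have "\<dots> \<le> (\<Sum>p\<in>?P. card (T p))" using finProf by (intro card_UN_le) simp
  finally have "real (card S) \<le> (\<Sum>p\<in>?P. real (card (T p)))"
    by (simp only: of_nat_le_iff of_nat_sum[symmetric])
  also have "\<dots> \<le> (\<Sum>p\<in>?P. exp (R + 2 * real d * real n))"
  proof (rule sum_mono)
    fix p assume "p \<in> ?P"
    have "real (card (T p)) \<le> exp (profile_weight n d p + 2 * real d * real n)"
      unfolding T_def by (rule card_has_profile_le_exp[OF assms(1,2)])
    also have "\<dots> \<le> exp (R + 2 * real d * real n)" using \<open>p \<in> ?P\<close> by simp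
    finally show "real (card (T p)) \<le> exp (R + 2 * real d * real n)" .
  qed
  also have "\<dots> \<le> real (card Prof) * exp (R + 2 * real d * real n)"
    using card_mono[OF finProf, of ?P] by (simp add: mult_right_mono)
  also have "\<dots> \<le> exp (2 * real d * real n) * exp (R + 2 * real d * real n)"
    unfolding Prof_def by (intro mult_right_mono card_profiles_le_exp) simp
  also have "\<dots> = exp (R + 4 * real d * real n)"
    by (simp add: exp_add[symmetric])
  finally show ?thesis .
qed

section \<open>Counting graphs with many bad edges\<close>

lemma card_edges_eq_sum_forward_neighbours:
  "simple_graph n H \<Longrightarrow> card H = (\<Sum>u<n. card (forward_neighbours H u))"
  using card_edges_filter_eq_sum[of n H "\<lambda>_. True"] by (simp add: forward_neighbours_def)

lemma card_cheap_edges_eq_sum: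
  assumes sg: "simple_graph n H"
  shows "card (cheap_edges H) = (\<Sum>u<n. card (forward_neighbours H u
    \<inter> second_neighbours_before (forward_neighbours H) u))"
proof -
  have "card (cheap_edges H)
      = (\<Sum>u<n. card {v. u < v \<and> {u, v} \<in> H \<and> (\<exists>w. \<forall>x\<in>{u, v}. w < x \<and> {w, x} \<in> H)})"
    unfolding cheap_edges_def by (rule card_edges_filter_eq_sum[OF sg])
  also have "\<dots> = (\<Sum>u<n. card (forward_neighbours H u
      \<inter> second_neighbours_before (forward_neighbours H) u))"
    using mem_second_neighbours_before_iff[OF sg]
    by (intro sum.cong arg_cong[where f = card])
      (auto simp: forward_neighbours_def, meson order.strict_trans)
  finally show ?thesis .
qed

lemma has_profile_cheap_edges:
  assumes sg: "simple_graph n H"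
  obtains p where "has_profile n H p" "profile_weight n d p
    = real (card (cheap_edges H)) * ln (real d)
      + (real (card H) - real (card (cheap_edges H))) * ln (real n / real d)"
proof
  let ?F = "forward_neighbours H" and ?U = "second_neighbours_before (forward_neighbours H)"
  let ?p = "\<lambda>u. (card (?F u \<inter> ?U u), card (?F u - ?U u))"
  have finF: "finite (?F u)" for u
    using forward_neighbours_subset_lessThan[OF sg] by (rule finite_subset) simp
  show "has_profile n H ?p"
    unfolding has_profile_def
  proof (intro allI impI)
    fix u assume "u < n"
    show "\<exists>A B. ?F u = A \<union> B \<and> A \<inter> B = {} \<and> A \<subseteq> ?U u \<and> card A = fst (?p u)
        \<and> B \<subseteq> {..<n} \<and> card B = snd (?p u)"
      using forward_neighbours_subset_lessThan[OF sg]
      by (intro exI[of _ "?F u \<inter> ?U u"] exI[of _ "?F u - ?U u"]) auto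
  qed
  have "real (card (?F u - ?U u)) = real (card (?F u)) - real (card (?F u \<inter> ?U u))" for u
    using card_Diff_subset_Int[of "?F u" "?U u"] card_mono[OF finF, of "?F u \<inter> ?U u"] finF[of u]
    by (simp add: of_nat_diff)
  then have "(\<Sum>u<n. real (snd (?p u))) = real (card H) - real (card (cheap_edges H))"
    unfolding card_edges_eq_sum_forward_neighbours[OF sg] card_cheap_edges_eq_sum[OF sg]
    by (simp add: sum_subtractf)
  moreover have "(\<Sum>u<n. real (fst (?p u))) = real (card (cheap_edges H))"
    unfolding card_cheap_edges_eq_sum[OF sg] by simp
  ultimately show "profile_weight n d ?p
    = real (card (cheap_edges H)) * ln (real d)
      + (real (card H) - real (card (cheap_edges H))) * ln (real n / real d)"
    unfolding profile_weight_def by simp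
qed

lemma has_profile_trivial:
  assumes sg: "simple_graph n H"
  obtains p where "has_profile n H p" "profile_weight n d p = real (card H) * ln (real n / real d)"
proof
  let ?p = "\<lambda>u. (0, card (forward_neighbours H u))"
  show "has_profile n H ?p"
    unfolding has_profile_def
  proof (intro allI impI)
    fix u assume "u < n"
    show "\<exists>A B. forward_neighbours H u = A \<union> B \<and> A \<inter> B = {}
        \<and> A \<subseteq> second_neighbours_before (forward_neighbours H) u \<and> card A = fst (?p u)
        \<and> B \<subseteq> {..<n} \<and> card B = snd (?p u)"
      using forward_neighbours_subset_lessThan[OF sg]
      by (intro exI[of _ "{}"] exI[of _ "forward_neighbours H u"]) auto
  qed
  show "profile_weight n d ?p = real (card H) * ln (real n / real d)"
    unfolding profile_weight_def card_edges_eq_sum_forward_neighbours[OF sg] by simp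
qed

lemma card_many_cheap_edges_le:
  fixes n d :: nat and k :: real
  assumes "d \<ge> 1" "d * d \<le> n"
  defines "m \<equiv> real n * real d / 2"
  shows "real (card {H. simple_graph n H \<and> regular n d H \<and> k \<le> real (card (cheap_edges H))})
    \<le> exp (k * ln (real d) + (m - k) * ln (real n / real d) + 4 * real d * real n)"
proof (rule card_le_exp_profile_weight)
  let ?L1 = "ln (real n / real d)" and ?L2 = "ln (real d)"
  have "real d * real d \<le> real n" using assms(2) by (metis of_nat_le_iff of_nat_mult)
  then have "real d \<le> real n / real d" using assms(1) by (simp add: le_divide_eq)
  then have "?L2 \<le> ?L1" using assms(1) by (intro ln_mono) auto
  fix H assume "H \<in> {H. simple_graph n H \<and> regular n d H \<and> k \<le> real (card (cheap_edges H))}"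
  then have sg: "simple_graph n H" and rg: "regular n d H" and k: "k \<le> real (card (cheap_edges H))"
    by auto
  obtain p where p: "has_profile n H p" "profile_weight n d p
      = real (card (cheap_edges H)) * ?L2 + (real (card H) - real (card (cheap_edges H))) * ?L1"
    by (rule has_profile_cheap_edges[OF sg])
  have "real (card H) = m" unfolding m_def by (rule real_card_regular[OF sg rg])
  have "k * (?L1 - ?L2) \<le> real (card (cheap_edges H)) * (?L1 - ?L2)"
    using k \<open>?L2 \<le> ?L1\<close> by (intro mult_right_mono) auto
  then have "profile_weight n d p \<le> k * ?L2 + (m - k) * ?L1"
    unfolding p(2) \<open>real (card H) = m\<close> by (simp add: algebra_simps)
  with sg rg p(1) show "simple_graph n H \<and> regular n d H
      \<and> (\<exists>p. has_profile n H p \<and> profile_weight n d p \<le> k * ?L2 + (m - k) * ?L1)" by blast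
qed (use assms(1) le_trans[OF _ assms(2)] in simp_all)

lemma ln_card_G_bad_le_sparse:
  fixes n d :: nat and c \<epsilon> \<delta> :: real
  assumes "d \<ge> 1" "d * d \<le> n" "c > 0" "\<epsilon> > 0" "\<delta> > 0" "card (G_bad n d c \<epsilon> \<delta>) > 0"
  defines "\<alpha> \<equiv> cheap_fraction d c \<epsilon> \<delta>" and "m \<equiv> real n * real d / 2"
  shows "ln (real (card (G_bad n d c \<epsilon> \<delta>)))
    \<le> (1 - \<alpha>) * m * ln (real n / real d) + \<alpha> * m * ln (real d) + 6 * real d * real n"
proof -
  let ?L1 = "ln (real n / real d)" and ?L2 = "ln (real d)"
  define R where "R = (\<alpha> * m - 1) * ?L2 + (m - (\<alpha> * m - 1)) * ?L1"
  have "m \<ge> 0" unfolding m_def by simp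
  have "real (card (G_bad n d c \<epsilon> \<delta>)) \<le> (m + 1)
      * real (card {H. simple_graph n H \<and> regular n d H \<and> \<alpha> * m - 1 \<le> real (card (cheap_edges H))})"
    using card_G_bad_le[OF assms(1,3,5,4)] unfolding \<alpha>_def m_def by simp
  also have "\<dots> \<le> (m + 1) * exp (R + 4 * real d * real n)"
    using card_many_cheap_edges_le[OF assms(1,2)] \<open>m \<ge> 0\<close> unfolding R_def m_def
    by (intro mult_left_mono) simp_all
  finally have "ln (real (card (G_bad n d c \<epsilon> \<delta>))) \<le> ln ((m + 1) * exp (R + 4 * real d * real n))"
    using assms(6) by (intro ln_mono) auto
  also have "\<dots> = ln (m + 1) + (R + 4 * real d * real n)"
    using \<open>m \<ge> 0\<close> by (simp add: ln_mult)
  finally have "ln (real (card (G_bad n d c \<epsilon> \<delta>))) \<le> ln (m + 1) + (R + 4 * real d * real n)" .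
  moreover have "ln (m + 1) \<le> real d * real n"
  proof -
    have "ln (m + 1) \<le> m" using ln_add_one_self_le_self[OF \<open>m \<ge> 0\<close>] by (simp add: add.commute)
    also have "\<dots> \<le> real d * real n" unfolding m_def by simp
    finally show ?thesis .
  qed
  moreover have "?L1 \<le> real d * real n"
  proof -
    have "d \<le> n" using assms(1,2) by (metis le_trans mult_le_mono1 nat_mult_1)
    then have "?L1 \<le> real n / real d" using ln_le_minus_one[of "real n / real d"] assms(1) by simp
    also have "\<dots> \<le> real n"
      using mult_left_mono[of 1 "real d" "real n"] assms(1) by (simp add: divide_le_eq)
    also have "\<dots> \<le> real d * real n" using mult_right_mono[of 1 "real d" "real n"] assms(1) by simp
    finally show ?thesis .
  qed
  moreover have "0 \<le> ?L2" using assms(1) by simp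
  moreover have "R = (1 - \<alpha>) * m * ?L1 + \<alpha> * m * ?L2 + ?L1 - ?L2"
    unfolding R_def by (simp add: algebra_simps)
  ultimately show ?thesis by linarith
qed

lemma ln_card_G_bad_le_dense:
  fixes n d :: nat and c \<epsilon> \<delta> :: real
  assumes "d \<ge> 1" "d \<le> n" "n < d * d" "c > 0" "\<epsilon> > 0" "\<delta> > 0" "card (G_bad n d c \<epsilon> \<delta>) > 0"
  defines "\<alpha> \<equiv> cheap_fraction d c \<epsilon> \<delta>" and "m \<equiv> real n * real d / 2"
  shows "ln (real (card (G_bad n d c \<epsilon> \<delta>)))
    \<le> (1 - \<alpha>) * m * ln (real n / real d) + \<alpha> * m * ln (real d) + 4 * real d * real n"
proof -
  have "real (card (G_bad n d c \<epsilon> \<delta>)) \<le> exp (m * ln (real n / real d) + 4 * real d * real n)"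
  proof (rule card_le_exp_profile_weight)
    fix H assume "H \<in> G_bad n d c \<epsilon> \<delta>"
    then have sg: "simple_graph n H" and rg: "regular n d H" using G_badD by auto
    then show "simple_graph n H \<and> regular n d H
        \<and> (\<exists>p. has_profile n H p \<and> profile_weight n d p \<le> m * ln (real n / real d))"
      using has_profile_trivial[OF sg, of d] real_card_regular[OF sg rg] unfolding m_def
      by (metis order_refl)
  qed (use assms(1,2) in simp_all)
  then have "ln (real (card (G_bad n d c \<epsilon> \<delta>))) \<le> m * ln (real n / real d) + 4 * real d * real n"
    using ln_mono assms(7) by fastforce
  moreover have "\<alpha> * m * ln (real n / real d) \<le> \<alpha> * m * ln (real d)"
  proof (intro mult_left_mono)
    have "real n < real d * real d" using assms(3) by (metis of_nat_less_iff of_nat_mult)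
    then show "ln (real n / real d) \<le> ln (real d)"
      using assms(1,2) by (simp add: divide_le_eq)
    show "0 \<le> \<alpha> * m"
      unfolding \<alpha>_def m_def using cheap_fraction_nonneg[OF assms(1,4,5,6)] by simp
  qed
  ultimately show ?thesis by (simp add: algebra_simps)
qed

lemma ln_card_G_bad_le:
  fixes n d :: nat and c \<epsilon> \<delta> :: real
  assumes "d \<ge> 1" "d \<le> n" "c > 0" "\<epsilon> > 0" "\<delta> > 0" "card (G_bad n d c \<epsilon> \<delta>) > 0"
  shows "ln (real (card (G_bad n d c \<epsilon> \<delta>))) \<le>
      (1 - c * (real d - 1) / (real d + 1) - \<epsilon> * \<delta> * real d / (3 * real d + 3))
        * (real d * real n / 2) * ln (real n / real d)
      + (c + \<epsilon> * \<delta> * real d / (3 * real d + 3)) * (real d * real n / 2) * ln (real d)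
      + 6 * real d * real n"
proof -
  let ?\<alpha> = "cheap_fraction d c \<epsilon> \<delta>" and ?m = "real n * real d / 2"
  have "ln (real (card (G_bad n d c \<epsilon> \<delta>)))
      \<le> (1 - ?\<alpha>) * ?m * ln (real n / real d) + ?\<alpha> * ?m * ln (real d) + 6 * real d * real n"
  proof (cases "d * d \<le> n")
    case True
    then show ?thesis using ln_card_G_bad_le_sparse[OF assms(1) True assms(3-6)] by simp
  next
    case False
    then have "n < d * d" by simp
    have "0 \<le> real d * real n" by simp
    with ln_card_G_bad_le_dense[OF assms(1,2) \<open>n < d * d\<close> assms(3-6)] show ?thesis by linarith
  qed
  moreover have "(1 - ?\<alpha>) * ?m * ln (real n / real d)
      = (1 - c * (real d - 1) / (real d + 1) - \<epsilon> * \<delta> * real d / (3 * real d + 3))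
        * (real d * real n / 2) * ln (real n / real d)"
    unfolding cheap_fraction_def by (simp add: algebra_simps)
  moreover have "?\<alpha> * ?m * ln (real d)
      \<le> (c + \<epsilon> * \<delta> * real d / (3 * real d + 3)) * (real d * real n / 2) * ln (real d)"
  proof -
    have "c * (real d - 1) / (real d + 1) \<le> c" using assms(3) by (simp add: divide_le_eq)
    then have "?\<alpha> \<le> c + \<epsilon> * \<delta> * real d / (3 * real d + 3)"
      unfolding cheap_fraction_def by simp
    then have "?\<alpha> * ?m * ln (real d) \<le> (c + \<epsilon> * \<delta> * real d / (3 * real d + 3)) * ?m * ln (real d)"
      using assms(1) by (intro mult_right_mono) auto
    then show ?thesis by (simp only: mult.commute[of "real n" "real d"])
  qed
  ultimately show ?thesis by linarith
qed

theorem lemma4: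
  fixes c \<epsilon> \<delta> :: real and d :: "nat \<Rightarrow> nat"
  assumes "0 < c" "c < 1" "\<epsilon> > 0" "\<delta> > 0"
    and "(\<lambda>n. real (d n) / real n) \<longlonglongrightarrow> 0"
    and "\<forall>\<^sub>F n in sequentially. d n \<ge> 1"
  shows "\<exists>C. \<forall>\<^sub>F n in sequentially.
    card (G_bad n (d n) c \<epsilon> \<delta>) > 0 \<longrightarrow>
    ln (real (card (G_bad n (d n) c \<epsilon> \<delta>))) \<le>
      (1 - c * (real (d n) - 1) / (real (d n) + 1) - \<epsilon> * \<delta> * real (d n) / (3 * real (d n) + 3))
        * (real (d n) * real n / 2) * ln (real n / real (d n))
      + (c + \<epsilon> * \<delta> * real (d n) / (3 * real (d n) + 3)) * (real (d n) * real n / 2) * ln (real (d n))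
      + C * real (d n) * real n"
proof -
  have "\<forall>\<^sub>F n in sequentially. real (d n) / real n < 1"
    using order_tendstoD(2)[OF assms(5), of 1] by simp
  then have "\<forall>\<^sub>F n in sequentially. 1 \<le> d n \<and> d n \<le> n"
    using assms(6) eventually_gt_at_top[of 0]
    by eventually_elim (simp add: divide_less_eq)
  then show ?thesis
    by (intro exI[of _ 6], elim eventually_mono) (use ln_card_G_bad_le assms(1,3,4) in blast)
qed

end
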